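(* Let the Mathieu group $M_{24}$ act on its natural $24$-element set $\Theta$, with a distinguished point $F\in\Theta$. Then (a) $hd((M_{24})^{\triangle}_{-})\geq 14$; (b) $M(23,14)\geq |M_{24}|=244{,}823{,}040$; (c) $M(22,14)\geq |M_{24}|/23=10{,}644{,}480$; (d) $M(21,14)\geq |M_{24}|/(23\cdot 22)=483{,}840$.
   Context: $hd(\pi,\sigma)$ is the number of points at which permutations $\pi,\sigma$ differ; $hd(A)$ is the minimum over distinct pairs in $A$. For a permutation $\pi$ of $\Theta$, $\pi^{\triangle}$ is defined by $\pi^{\triangle}(\pi^{-1}(F))=\pi(F)$, $\pi^{\triangle}(F)=F$, $\pi^{\triangle}(x)=\pi(x)$ otherwise; $\pi^{\triangle}_{-}$ is its restriction to $\Theta\setminus\{F\}$; for a set $S$ of permutations, $S^{\triangle}_{-}=\{\pi^{\triangle}_{-}:\pi\in S\}$. $M(n,d)$ is the maximum size of a set of permutations of an $n$-element set with pairwise Hamming distance at least $d$. *)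

theory Defs
  imports "HOL-Combinatorics.Permutations"
begin

definition Theta :: "nat set" where "Theta = {0..<24}"

text \<open>Extended binary Golay code (words = supports, subsets of Theta):
  spanned over GF(2) by the 12 cyclic shifts x^i g(x), i < 12, of the
  generator polynomial g(x) = 1 + x^2 + x^4 + x^5 + x^6 + x^10 + x^11 of the
  binary quadratic-residue code of length 23, extended by a parity coordinate 23.\<close>
definition golay_gens :: "nat set set" where
  "golay_gens = (\<lambda>i. insert 23 ((\<lambda>e. (e + i) mod 23) ` {0,2,4,5,6,10,11})) ` {0..<12}"

inductive_set golay :: "nat set set" where
  zero: "{} \<in> golay"
| add: "B \<in> golay_gens \<Longrightarrow> X \<in> golay \<Longrightarrow> (B - X) \<union> (X - B) \<in> golay"

definition M24 :: "(nat \<Rightarrow> nat) set" where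
  "M24 = {p. p permutes Theta \<and> (\<forall>C \<in> golay. p ` C \<in> golay)}"

definition hd_on :: "'a set \<Rightarrow> ('a \<Rightarrow> 'a) \<Rightarrow> ('a \<Rightarrow> 'a) \<Rightarrow> nat" where
  "hd_on S p q = card {x \<in> S. p x \<noteq> q x}"

text \<open>pi^triangle; as a function it already fixes F and is the identity outside
  Theta, so it also serves as the restriction pi^triangle_- to Theta - {F}.\<close>
definition tri :: "nat \<Rightarrow> (nat \<Rightarrow> nat) \<Rightarrow> (nat \<Rightarrow> nat)" where
  "tri F p = (\<lambda>x. if x = F then F else if p x = F then p F else p x)"

definition perm_code :: "nat \<Rightarrow> nat \<Rightarrow> (nat \<Rightarrow> nat) set \<Rightarrow> bool" where
  "perm_code n d A \<longleftrightarrow> (\<forall>p\<in>A. p permutes {0..<n}) \<and>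
     (\<forall>p\<in>A. \<forall>q\<in>A. p \<noteq> q \<longrightarrow> d \<le> hd_on {0..<n} p q)"

definition Mnd :: "nat \<Rightarrow> nat \<Rightarrow> nat" where
  "Mnd n d = Max (card ` {A. perm_code n d A})"

end

theory Submission
  imports Defs
begin

text \<open>A nonidentity element of M24 fixes at most 8 of the 24 points, and exactly 8 only if it
  is an involution. So distinct p, q in M24 differ in at least 16 points, and in at least 17
  unless q^-1 p is an involution. Passing from p, q to their triangles can remove
  disagreements only at F, p^-1 F and q^-1 F, and at all three only if q^-1 p maps
  F to p^-1 F to q^-1 F, which an involution cannot do; hence the distance stays at least 14.
  For (b)-(d) take F = 23 and the elements whose triangles also fix 22, resp. 22 and 21, so that these
  coordinates can be dropped; their numbers are sums of stabilizer orders.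

  The order of M24, its 5-transitivity and the fixed-point bound come from an explicit
  stabilizer chain, checked by evaluation, along the base 22, 21, 23, 0, 1, 3, 2. Its last steps use
  that an element fixing 5 points of an octad stabilizes it, as the Golay code has minimum
  weight 8.\<close>

section \<open>Permutation groups\<close>

locale perm_group =
  fixes G :: "('a \<Rightarrow> 'a) set"
  assumes comp_closed: "g \<in> G \<Longrightarrow> h \<in> G \<Longrightarrow> g \<circ> h \<in> G"
    and inv_closed: "g \<in> G \<Longrightarrow> inv g \<in> G"
    and bij: "g \<in> G \<Longrightarrow> bij g"
begin

lemma inv_apply [simp]: "g \<in> G \<Longrightarrow> inv g (g x) = x"
  using bij by (simp add: bij_is_inj)

lemma apply_inv [simp]: "g \<in> G \<Longrightarrow> g (inv g x) = x"
  using bij by (simp add: bij_is_surj surj_f_inv_f)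

lemma pointwise_stabilizer: "perm_group {g \<in> G. \<forall>x\<in>A. g x = x}"
proof unfold_locales
  fix g assume g: "g \<in> {g \<in> G. \<forall>x\<in>A. g x = x}"
  then have "inv g x = x" if "x \<in> A" for x
    using inv_apply[of g x] that by simp
  with g show "inv g \<in> {g \<in> G. \<forall>x\<in>A. g x = x}" by (simp add: inv_closed)
qed (auto simp: comp_closed bij)

lemma transversal_bij:
  assumes T: "T \<subseteq> G" and inj: "inj_on (\<lambda>t. t b) T"
    and cover: "\<And>g. g \<in> G \<Longrightarrow> \<exists>t\<in>T. t b = g b"
  shows "bij_betw (\<lambda>(t, h). t \<circ> h) (T \<times> {h \<in> G. h b = b}) G"
proof (rule bij_betw_imageI)
  show "inj_on (\<lambda>(t, h). t \<circ> h) (T \<times> {h \<in> G. h b = b})"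
  proof (rule inj_onI, clarify)
    fix t h t' h'
    assume t: "t \<in> T" "t' \<in> T" and h: "h \<in> G" "h b = b" "h' \<in> G" "h' b = b"
      and eq: "t \<circ> h = t' \<circ> h'"
    from fun_cong[OF eq, of b] h have "t b = t' b" by simp
    with inj t have "t = t'" by (auto dest: inj_onD)
    with eq have "inv t \<circ> (t \<circ> h) = inv t \<circ> (t \<circ> h')" by simp
    with t T have "h = h'" by (simp add: fun_eq_iff subset_iff)
    with \<open>t = t'\<close> show "t = t' \<and> h = h'" by simp
  qed
  show "(\<lambda>(t, h). t \<circ> h) ` (T \<times> {h \<in> G. h b = b}) = G"
  proof (intro equalityI subsetI)
    fix g assume "g \<in> (\<lambda>(t, h). t \<circ> h) ` (T \<times> {h \<in> G. h b = b})"
    with T show "g \<in> G" by (auto intro: comp_closed)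
  next
    fix g assume g: "g \<in> G"
    then obtain t where t: "t \<in> T" "t b = g b" using cover by blast
    with T have tG: "t \<in> G" by blast
    have "inv t \<circ> g \<in> {h \<in> G. h b = b}"
      using g tG t(2) by (auto intro: comp_closed inv_closed simp flip: t(2))
    moreover have "g = t \<circ> (inv t \<circ> g)" using tG by (simp add: fun_eq_iff)
    ultimately show "g \<in> (\<lambda>(t, h). t \<circ> h) ` (T \<times> {h \<in> G. h b = b})"
      using t(1) by (intro image_eqI[of _ _ "(t, inv t \<circ> g)"]) auto
  qed
qed

lemma card_coset:
  assumes u: "u \<in> G" and v: "v \<in> G"
  shows "card {g \<in> G. \<forall>x\<in>A. g (u x) = v x} = card {g \<in> G. \<forall>x\<in>A. g x = x}"
proof (rule bij_betw_same_card[of "\<lambda>g. inv v \<circ> g \<circ> u"], rule bij_betw_byWitness[where f' = "\<lambda>h. v \<circ> h \<circ> inv u"])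
  show "\<forall>g\<in>{g \<in> G. \<forall>x\<in>A. g (u x) = v x}. v \<circ> (inv v \<circ> g \<circ> u) \<circ> inv u = g"
    using u v by (simp add: fun_eq_iff)
  show "\<forall>h\<in>{g \<in> G. \<forall>x\<in>A. g x = x}. inv v \<circ> (v \<circ> h \<circ> inv u) \<circ> u = h"
    using u v by (simp add: fun_eq_iff)
  show "(\<lambda>g. inv v \<circ> g \<circ> u) ` {g \<in> G. \<forall>x\<in>A. g (u x) = v x} \<subseteq> {g \<in> G. \<forall>x\<in>A. g x = x}"
    using u v by (auto intro!: comp_closed inv_closed)
  show "(\<lambda>h. v \<circ> h \<circ> inv u) ` {g \<in> G. \<forall>x\<in>A. g x = x} \<subseteq> {g \<in> G. \<forall>x\<in>A. g (u x) = v x}"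
    using u v by (auto intro!: comp_closed inv_closed)
qed

end

lemma card_fixed_points_conj:
  assumes "u permutes S"
  shows "card {x \<in> S. (inv u \<circ> r \<circ> u) x = x} = card {x \<in> S. r x = x}"
proof -
  have "{x \<in> S. r x = x} = u ` {x \<in> S. (inv u \<circ> r \<circ> u) x = x}"
  proof (intro equalityI subsetI)
    fix y assume y: "y \<in> {x \<in> S. r x = x}"
    then have "inv u y \<in> {x \<in> S. (inv u \<circ> r \<circ> u) x = x}"
      using assms by (simp add: permutes_inverses permutes_inv permutes_in_image)
    then show "y \<in> u ` {x \<in> S. (inv u \<circ> r \<circ> u) x = x}"
      using assms by (auto simp: permutes_inverses intro: image_eqI[of _ _ "inv u y"])
  next
    fix y assume "y \<in> u ` {x \<in> S. (inv u \<circ> r \<circ> u) x = x}"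
    then obtain x where "x \<in> S" "inv u (r (u x)) = x" "y = u x" by auto
    then show "y \<in> {x \<in> S. r x = x}"
      using assms by (metis (mono_tags, lifting) mem_Collect_eq permutes_in_image permutes_inverses(1))
  qed
  then show ?thesis
    using assms by (simp add: card_image permutes_inj_on)
qed

section \<open>Triangles of permutations and Hamming distance\<close>

lemma tri_eq_transpose_comp: "inj p \<Longrightarrow> tri F p = Transposition.transpose F (p F) \<circ> p"
  by (auto simp: fun_eq_iff tri_def Transposition.transpose_def dest: injD)

lemma tri_permutes:
  assumes p: "p permutes S" and F: "F \<in> S"
  shows "tri F p permutes (S - {F})"
proof -
  have "tri F p permutes S"
    unfolding tri_eq_transpose_comp[OF permutes_inj[OF p]]
    using p F by (intro permutes_compose permutes_swap_id) (auto simp: permutes_in_image)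
  then show ?thesis by (rule permutes_superset) (simp add: tri_def)
qed

lemma hd_on_eq_card_minus_fixed:
  assumes "finite S" "p permutes S" "q permutes S"
  shows "hd_on S p q = card S - card {x \<in> S. (inv q \<circ> p) x = x}"
proof -
  have "{x \<in> S. (inv q \<circ> p) x = x} = S - {x \<in> S. p x \<noteq> q x}"
    by (auto simp: permutes_inv_eq[OF assms(3)])
  then show ?thesis
    using assms(1) card_mono[OF assms(1), of "{x \<in> S. p x \<noteq> q x}"]
    by (simp add: hd_on_def card_Diff_subset)
qed

lemma tri_lost_disagreements:
  assumes p: "p permutes S" and q: "q permutes S"
  shows "{x \<in> S. p x \<noteq> q x} - {x \<in> S - {F}. tri F p x \<noteq> tri F q x} \<subseteq> {F, inv p F, inv q F}"
proof
  fix x assume x: "x \<in> {x \<in> S. p x \<noteq> q x} - {x \<in> S - {F}. tri F p x \<noteq> tri F q x}"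
  show "x \<in> {F, inv p F, inv q F}"
  proof (rule ccontr)
    assume "x \<notin> {F, inv p F, inv q F}"
    then have "x \<noteq> F" "p x \<noteq> F" "q x \<noteq> F"
      using permutes_inverses(2)[OF p, of x] permutes_inverses(2)[OF q, of x] by auto
    with x show False by (auto simp: tri_def)
  qed
qed

text \<open>If q^-1 p is an involution, at most two disagreements are lost: losing F, p^-1 F and
  q^-1 F (all distinct) would force q^-1 p to map F to p^-1 F and then to q^-1 F.\<close>
lemma tri_lost_disagreements_involution:
  assumes p: "p permutes S" and q: "q permutes S"
    and inv2: "(inv q \<circ> p) \<circ> (inv q \<circ> p) = id"
  shows "card ({x \<in> S. p x \<noteq> q x} - {x \<in> S - {F}. tri F p x \<noteq> tri F q x}) \<le> 2"
    (is "card ?L \<le> 2")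
proof (rule ccontr)
  define a b where "a = inv p F" and "b = inv q F"
  have pa: "p a = F" and qb: "q b = F"
    using p q by (simp_all add: a_def b_def permutes_inverses)
  assume "\<not> card ?L \<le> 2"
  moreover have sub: "?L \<subseteq> {F, a, b}"
    unfolding a_def b_def by (rule tri_lost_disagreements[OF p q])
  moreover have "card {F, a, b} \<le> 3" by (simp add: card_insert_le_m1)
  ultimately have L: "?L = {F, a, b}" and "card {F, a, b} = 3"
    using card_mono[OF _ sub] card_subset_eq[OF _ sub] by (simp_all add: le_antisym)
  then have dist: "F \<noteq> a" "a \<noteq> b" "F \<noteq> b"
    by (auto simp: card_insert_if split: if_splits)
  have "a \<in> ?L" using L by blast
  moreover have "q a \<noteq> F" using qb dist(2) permutes_inj[OF q] by (auto dest: injD)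
  ultimately have "p F = q a" using pa dist(1) by (auto simp: tri_def)
  then have "(inv q \<circ> p) ((inv q \<circ> p) F) = b"
    using pa by (simp add: b_def permutes_inverses(2)[OF q])
  with fun_cong[OF inv2, of F] dist(3) show False by simp
qed

lemma hd_on_tri_ge:
  assumes S: "finite S" and p: "p permutes S" and q: "q permutes S"
  shows "hd_on S p q \<le> hd_on (S - {F}) (tri F p) (tri F q) + 3"
    and "(inv q \<circ> p) \<circ> (inv q \<circ> p) = id \<Longrightarrow> hd_on S p q \<le> hd_on (S - {F}) (tri F p) (tri F q) + 2"
proof -
  let ?D = "{x \<in> S. p x \<noteq> q x}" and ?D' = "{x \<in> S - {F}. tri F p x \<noteq> tri F q x}"
  have "card ?D \<le> card (?D' \<union> (?D - ?D'))"
    using S by (intro card_mono) auto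
  also have "\<dots> \<le> card ?D' + card (?D - ?D')" by (rule card_Un_le)
  finally have le: "hd_on S p q \<le> hd_on (S - {F}) (tri F p) (tri F q) + card (?D - ?D')"
    by (simp add: hd_on_def)
  have "card (?D - ?D') \<le> card {F, inv p F, inv q F}"
    by (intro card_mono tri_lost_disagreements p q) simp
  also have "\<dots> \<le> 3" by (simp add: card_insert_le_m1)
  finally show "hd_on S p q \<le> hd_on (S - {F}) (tri F p) (tri F q) + 3" using le by linarith
  assume "(inv q \<circ> p) \<circ> (inv q \<circ> p) = id"
  then have "card (?D - ?D') \<le> 2" by (rule tri_lost_disagreements_involution[OF p q])
  with le show "hd_on S p q \<le> hd_on (S - {F}) (tri F p) (tri F q) + 2" by linarith
qed

section \<open>The extended Golay code\<close>

definition golay_gen_list :: "nat \<Rightarrow> nat list" where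
  "golay_gen_list i = 23 # map (\<lambda>e. (e + i) mod 23) [0,2,4,5,6,10,11]"

lemma golay_gens_eq: "golay_gens = (\<lambda>i. set (golay_gen_list i)) ` {0..<12}"
  by (simp add: golay_gens_def golay_gen_list_def)

lemma golay_symdiff: "X \<in> golay \<Longrightarrow> Y \<in> golay \<Longrightarrow> (X - Y) \<union> (Y - X) \<in> golay"
proof (induction X rule: golay.induct)
  case (add B X)
  have "((B - X) \<union> (X - B) - Y) \<union> (Y - ((B - X) \<union> (X - B)))
      = (B - ((X - Y) \<union> (Y - X))) \<union> (((X - Y) \<union> (Y - X)) - B)"
    by blast
  with add show ?case by (metis golay.add)
qed simp

lemma golay_subset_Theta: "X \<in> golay \<Longrightarrow> X \<subseteq> Theta"
  by (induction X rule: golay.induct)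
    (auto simp: golay_gens_eq golay_gen_list_def Theta_def)

lemma finite_golay: "finite golay"
proof (rule finite_subset)
  show "golay \<subseteq> Pow Theta" using golay_subset_Theta by blast
qed (simp add: Theta_def)

definition ones :: "bool list \<Rightarrow> nat set" where
  "ones w = {x. x < length w \<and> w ! x}"

definition word_of :: "nat list \<Rightarrow> bool list" where
  "word_of xs = fold (\<lambda>x w. w[x := True]) xs (replicate 24 False)"

fun word_add :: "bool list \<Rightarrow> bool list \<Rightarrow> bool list" where
  "word_add (a # as) (b # bs) = (a \<noteq> b) # word_add as bs"
| "word_add _ _ = []"

lemma length_word_of [simp]: "length (word_of xs) = 24"
proof -
  have "length (fold (\<lambda>x w. w[x := True]) xs w) = length w" for w
    by (induction xs arbitrary: w) auto
  then show ?thesis by (simp add: word_of_def)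
qed

lemma ones_word_of: "set xs \<subseteq> {..<24} \<Longrightarrow> ones (word_of xs) = set xs"
proof -
  have upd: "i < length w \<Longrightarrow> w[x := True] ! i = (w ! i \<or> i = x)" for w x i
    by (cases "i = x") auto
  have "i < length w \<Longrightarrow> fold (\<lambda>x w. w[x := True]) xs w ! i = (w ! i \<or> i \<in> set xs)" for w i
    by (induction xs arbitrary: w) (auto simp: upd)
  moreover have "length (fold (\<lambda>x w. w[x := True]) xs w) = length w" for w
    by (induction xs arbitrary: w) auto
  ultimately show "set xs \<subseteq> {..<24} \<Longrightarrow> ones (word_of xs) = set xs"
    by (auto simp: ones_def word_of_def)
qed

lemma ones_replicate_False [simp]: "ones (replicate n False) = {}"
  by (auto simp: ones_def)

lemma ones_Cons: "ones (b # w) = (if b then {0} else {}) \<union> Suc ` ones w"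
proof (intro set_eqI)
  fix x show "x \<in> ones (b # w) \<longleftrightarrow> x \<in> (if b then {0} else {}) \<union> Suc ` ones w"
    by (cases x) (auto simp: ones_def)
qed

lemma card_ones: "card (ones w) = count_list w True"
proof (induction w)
  case Nil
  show ?case by (simp add: ones_def)
next
  case (Cons b w)
  have "finite (Suc ` ones w)" "0 \<notin> Suc ` ones w" by (auto simp: ones_def)
  with Cons show ?case by (simp add: ones_Cons card_image)
qed

lemma length_word_add [simp]: "length (word_add a b) = min (length a) (length b)"
  by (induction a b rule: word_add.induct) auto

lemma nth_word_add [simp]:
  "i < length a \<Longrightarrow> i < length b \<Longrightarrow> word_add a b ! i = (a ! i \<noteq> b ! i)"
  by (induction a b arbitrary: i rule: word_add.induct) (auto simp: nth_Cons split: nat.splits)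

lemma ones_word_add:
  "length a = length b \<Longrightarrow> ones (word_add a b) = (ones a - ones b) \<union> (ones b - ones a)"
  by (auto simp: ones_def)

lemma word_add_cancel: "length a = length b \<Longrightarrow> word_add a (word_add a b) = b"
  by (rule nth_equalityI) auto

lemma word_add_left_commute:
  "length a = length c \<Longrightarrow> length b = length c \<Longrightarrow> word_add a (word_add b c) = word_add b (word_add a c)"
  by (rule nth_equalityI) auto

lemma golay_gens_golay: "B \<in> golay_gens \<Longrightarrow> B \<in> golay"
  using golay.add[OF _ golay.zero] by simp

definition golay_basis :: "bool list list" where
  "golay_basis = map (word_of \<circ> golay_gen_list) [0..<12]"

lemma golay_basis_in_gens: "g \<in> set golay_basis \<Longrightarrow> length g = 24 \<and> ones g \<in> golay_gens"
  by (auto simp: golay_basis_def golay_gens_eq ones_word_of golay_gen_list_def)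

lemma golay_gens_in_basis: "B \<in> golay_gens \<Longrightarrow> \<exists>g\<in>set golay_basis. ones g = B"
  by (auto simp: golay_basis_def golay_gens_eq ones_word_of golay_gen_list_def)

text \<open>P holds on the whole coset w + span gs; this avoids enumerating the code as a list.\<close>
fun forall_coset :: "(bool list \<Rightarrow> bool) \<Rightarrow> bool list list \<Rightarrow> bool list \<Rightarrow> bool" where
  "forall_coset P [] w = P w"
| "forall_coset P (g # gs) w = (forall_coset P gs w \<and> forall_coset P gs (word_add g w))"

lemma forall_coset_self: "forall_coset P gs w \<Longrightarrow> P w"
  by (induction gs arbitrary: w) auto

lemma forall_coset_word_add:
  assumes "g \<in> set gs" and "\<forall>h\<in>set gs. length h = length w"
  shows "forall_coset P gs (word_add g w) = forall_coset P gs w"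
  using assms
proof (induction gs arbitrary: w)
  case (Cons h gs)
  show ?case
  proof (cases "g = h")
    case True
    then show ?thesis using Cons.prems by (auto simp: word_add_cancel)
  next
    case False
    then have "g \<in> set gs" using Cons.prems by simp
    moreover have "word_add h (word_add g w) = word_add g (word_add h w)"
      using Cons.prems by (intro word_add_left_commute) auto
    ultimately show ?thesis using Cons.prems Cons.IH[of w] Cons.IH[of "word_add h w"] by simp
  qed
qed simp

lemma forall_coset_golay:
  assumes P: "forall_coset P golay_basis (replicate 24 False)" and X: "X \<in> golay"
  shows "\<exists>w. length w = 24 \<and> ones w = X \<and> P w"
proof -
  from X have "\<exists>w. length w = 24 \<and> ones w = X \<and> forall_coset P golay_basis w"
  proof (induction X rule: golay.induct)
    case zero
    show ?case using P by (intro exI[of _ "replicate 24 False"]) (simp add: ones_def)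
  next
    case (add B X)
    then obtain w where w: "length w = 24" "ones w = X" "forall_coset P golay_basis w" by blast
    obtain g where g: "g \<in> set golay_basis" "ones g = B" using golay_gens_in_basis add(1) by blast
    have "length g = 24" using golay_basis_in_gens g(1) by blast
    then show ?case
      using w g golay_basis_in_gens
      by (intro exI[of _ "word_add g w"]) (simp add: ones_word_add forall_coset_word_add)
  qed
  then show ?thesis using forall_coset_self by blast
qed

lemma golay_min_weight_check:
  "forall_coset (\<lambda>w. w = replicate 24 False \<or> 8 \<le> count_list w True) golay_basis (replicate 24 False)"
  by code_simp

lemma golay_min_weight: "X \<in> golay \<Longrightarrow> X \<noteq> {} \<Longrightarrow> 8 \<le> card X"
proof -
  assume "X \<in> golay" "X \<noteq> {}"
  then obtain w where "ones w = X" "w = replicate 24 False \<or> 8 \<le> count_list w True"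
    using forall_coset_golay[OF golay_min_weight_check] by blast
  with \<open>X \<noteq> {}\<close> show ?thesis by (auto simp: card_ones)
qed

text \<open>Row k of the basis starts at position k, so every codeword is reduced to the zero word.\<close>
fun echelon_reduce :: "nat \<Rightarrow> bool list list \<Rightarrow> bool list \<Rightarrow> bool list" where
  "echelon_reduce k [] w = w"
| "echelon_reduce k (g # gs) w = echelon_reduce (Suc k) gs (if w ! k then word_add g w else w)"

lemma golay_echelon_reduce:
  assumes "\<forall>g\<in>set gs. length g = length w \<and> ones g \<in> golay"
    and "ones (echelon_reduce k gs w) \<in> golay"
  shows "ones w \<in> golay"
  using assms
proof (induction gs arbitrary: k w)
  case (Cons g gs)
  show ?case
  proof (cases "w ! k")
    case True
    with Cons have "ones (word_add g w) \<in> golay" by auto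
    then have "ones (word_add g (word_add g w)) \<in> golay"
      using Cons.prems by (simp add: ones_word_add golay_symdiff)
    then show ?thesis using Cons.prems by (simp add: word_add_cancel)
  qed (use Cons in auto)
qed simp

text \<open>The basis is a parameter so that code_simp evaluates golay_basis only once per check.\<close>
definition in_golay_list :: "bool list list \<Rightarrow> nat list \<Rightarrow> bool" where
  "in_golay_list B xs \<longleftrightarrow> list_all (\<lambda>x. x < 24) xs \<and> echelon_reduce 0 B (word_of xs) = replicate 24 False"

lemma in_golay_list_golay: "in_golay_list golay_basis xs \<Longrightarrow> set xs \<in> golay"
proof -
  assume xs: "in_golay_list golay_basis xs"
  then have "ones (echelon_reduce 0 golay_basis (word_of xs)) \<in> golay"
    by (simp add: in_golay_list_def golay.zero)
  moreover have "\<forall>g\<in>set golay_basis. length g = length (word_of xs) \<and> ones g \<in> golay"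
    using golay_basis_in_gens golay_gens_golay by simp
  ultimately have "ones (word_of xs) \<in> golay" using golay_echelon_reduce by blast
  moreover have "set xs \<subseteq> {..<24}" using xs by (auto simp: in_golay_list_def list_all_iff)
  ultimately show ?thesis by (simp add: ones_word_of)
qed

section \<open>The Mathieu group M24\<close>

lemma M24_permutes: "p \<in> M24 \<Longrightarrow> p permutes Theta"
  by (simp add: M24_def)

lemma M24_golay: "p \<in> M24 \<Longrightarrow> C \<in> golay \<Longrightarrow> p ` C \<in> golay"
  by (simp add: M24_def)

lemma id_in_M24: "id \<in> M24"
  by (simp add: M24_def)

lemma M24_inv_golay:
  assumes p: "p \<in> M24" and C: "C \<in> golay"
  shows "inv p ` C \<in> golay"
proof -
  have inj: "inj p" using permutes_inj[OF M24_permutes[OF p]] .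
  have "(\<lambda>C. p ` C) ` golay \<subseteq> golay" using p by (auto simp: M24_golay)
  moreover have "inj_on (\<lambda>C. p ` C) golay"
    using inj by (simp add: inj_on_def inj_image_eq_iff)
  ultimately have "(\<lambda>C. p ` C) ` golay = golay"
    using finite_golay by (simp add: endo_inj_surj)
  with C obtain D where "D \<in> golay" "C = p ` D" by blast
  with inj show ?thesis by (simp add: image_inv_f_f)
qed

interpretation M24: perm_group M24
proof
  fix p q assume p: "p \<in> M24" and q: "q \<in> M24"
  have "(p \<circ> q) ` C \<in> golay" if "C \<in> golay" for C
    using p q that by (metis image_comp M24_golay)
  with p q show "p \<circ> q \<in> M24"
    by (simp add: M24_def permutes_compose del: comp_apply)
  show "inv p \<in> M24"
    using p by (simp add: M24_def permutes_inv M24_inv_golay)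
  show "bij p" using permutes_bij[OF M24_permutes[OF p]] .
qed

lemma M24_apply_in_Theta_iff: "p \<in> M24 \<Longrightarrow> p x \<in> Theta \<longleftrightarrow> x \<in> Theta"
  using permutes_in_image[OF M24_permutes] .

lemma finite_M24: "finite M24"
proof (rule finite_subset)
  show "M24 \<subseteq> {p. p permutes Theta}" using M24_permutes by blast
  show "finite {p. p permutes Theta}" by (rule finite_permutations) (simp add: Theta_def)
qed

definition list_perm :: "nat list \<Rightarrow> nat \<Rightarrow> nat" where
  "list_perm p x = (if x < 24 then p ! x else x)"

definition M24_list :: "bool list list \<Rightarrow> nat list \<Rightarrow> bool" where
  "M24_list B p \<longleftrightarrow> length p = 24 \<and> distinct p \<and> list_all (\<lambda>x. x < 24) p \<and>
     list_all (\<lambda>i. in_golay_list B (map (nth p) (golay_gen_list i))) [0..<12]"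

lemma list_perm_M24:
  assumes p: "M24_list golay_basis p"
  shows "list_perm p \<in> M24"
proof -
  have len: "length p = 24" and dist: "distinct p" and lt: "\<forall>x\<in>set p. x < 24"
    and gens: "\<forall>i<12. in_golay_list golay_basis (map (nth p) (golay_gen_list i))"
    using p by (auto simp: M24_list_def list_all_iff)
  have perm: "list_perm p permutes Theta"
  proof (rule inj_imp_permutes)
    show "inj_on (list_perm p) Theta"
      using dist len by (auto simp: inj_on_def list_perm_def Theta_def nth_eq_iff_index_eq)
  qed (use len lt in \<open>auto simp: list_perm_def Theta_def\<close>)
  have gen_image: "list_perm p ` B \<in> golay" if "B \<in> golay_gens" for B
  proof -
    from that obtain i where i: "i < 12" "B = set (golay_gen_list i)"
      by (auto simp: golay_gens_eq)
    have "list_perm p ` B = set (map (nth p) (golay_gen_list i))"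
      using i by (auto simp: list_perm_def golay_gen_list_def)
    moreover have "set (map (nth p) (golay_gen_list i)) \<in> golay"
      using gens i by (blast intro: in_golay_list_golay)
    ultimately show ?thesis by (simp only:)
  qed
  have "list_perm p ` C \<in> golay" if "C \<in> golay" for C
    using that
  proof (induction C rule: golay.induct)
    case (add B X)
    have "list_perm p ` ((B - X) \<union> (X - B))
        = (list_perm p ` B - list_perm p ` X) \<union> (list_perm p ` X - list_perm p ` B)"
      using permutes_inj[OF perm] by (simp add: image_Un image_set_diff)
    with add gen_image show ?case by (simp add: golay_symdiff)
  qed (simp add: golay.zero)
  with perm show ?thesis by (simp add: M24_def)
qed

text \<open>The codeword g ` C agrees with C on A, so C and g ` C differ in at most 6 points;
  by the minimum weight 8 they coincide.\<close>
lemma M24_stabilizes_octad: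
  assumes g: "g \<in> M24" and C: "C \<in> golay" "card C = 8"
    and A: "A \<subseteq> C" "5 \<le> card A" and fixed: "\<forall>x\<in>A. g x = x"
  shows "g ` C = C"
proof (rule ccontr)
  assume ne: "g ` C \<noteq> C"
  have fin: "finite C" using C(2) card.infinite by force
  have gC: "g ` C \<in> golay" "card (g ` C) = 8"
    using M24_golay[OF g C(1)] C(2) card_image[OF inj_on_subset[OF bij_is_inj[OF M24.bij[OF g]]]]
    by auto
  have AgC: "A \<subseteq> g ` C" using A(1) fixed by (metis image_eqI subsetD subsetI)
  let ?E = "(C - g ` C) \<union> (g ` C - C)"
  have "?E \<in> golay" "?E \<noteq> {}" using golay_symdiff[OF C(1) gC(1)] ne by auto
  then have "8 \<le> card ?E" by (rule golay_min_weight)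
  also have "card ?E \<le> card ((C - A) \<union> (g ` C - A))"
    using A(1) AgC fin by (intro card_mono) auto
  also have "\<dots> \<le> card (C - A) + card (g ` C - A)" by (rule card_Un_le)
  also have "\<dots> \<le> 6"
    using A AgC C(2) gC(2) fin by (simp add: card_Diff_subset finite_subset)
  finally show False by simp
qed

definition octad_list :: "nat list \<Rightarrow> bool" where
  "octad_list C \<longleftrightarrow> in_golay_list golay_basis C \<and> distinct C \<and> length C = 8"

definition new_common_points :: "nat list \<Rightarrow> nat list \<Rightarrow> nat list \<Rightarrow> nat list" where
  "new_common_points A C1 C2 = [x \<leftarrow> C1. x \<in> set C2 \<and> x \<notin> set A]"

text \<open>If the octads C1 and C2 both meet the fixed set A in at least 5 points, they are
  stabilized; a single common point outside A is then fixed as well.\<close>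
definition forcing_step :: "nat list \<Rightarrow> nat list \<Rightarrow> nat list \<Rightarrow> bool" where
  "forcing_step A C1 C2 \<longleftrightarrow> octad_list C1 \<and> octad_list C2 \<and>
     5 \<le> length [x \<leftarrow> C1. x \<in> set A] \<and> 5 \<le> length [x \<leftarrow> C2. x \<in> set A] \<and>
     length (new_common_points A C1 C2) = 1"

fun extend_fixed :: "nat list \<Rightarrow> (nat list \<times> nat list) list \<Rightarrow> nat list" where
  "extend_fixed A [] = A"
| "extend_fixed A ((C1, C2) # steps) =
     extend_fixed (if forcing_step A C1 C2 then new_common_points A C1 C2 @ A else A) steps"

lemma M24_stabilizes_octad_list:
  assumes g: "g \<in> M24" and C: "octad_list C"
    and A: "5 \<le> length [x \<leftarrow> C. x \<in> set A]" and fixed: "\<forall>x\<in>set A. g x = x"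
  shows "g ` set C = set C"
proof (rule M24_stabilizes_octad[OF g, where A = "set [x \<leftarrow> C. x \<in> set A]"])
  show "set C \<in> golay" "card (set C) = 8"
    using C by (auto simp: octad_list_def in_golay_list_golay distinct_card)
  show "5 \<le> card (set [x \<leftarrow> C. x \<in> set A])"
    using C A distinct_card[OF distinct_filter, of C "\<lambda>x. x \<in> set A"]
    by (simp add: octad_list_def)
qed (use fixed in auto)

lemma M24_fixes_forced_point:
  assumes g: "g \<in> M24" and fixed: "\<forall>x\<in>set A. g x = x" and step: "forcing_step A C1 C2"
  shows "\<forall>x\<in>set (new_common_points A C1 C2 @ A). g x = x"
proof -
  obtain y where y: "new_common_points A C1 C2 = [y]"
    using step by (auto simp: forcing_step_def length_Suc_conv)
  have C1: "g ` set C1 = set C1" and C2: "g ` set C2 = set C2"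
    using step by (intro M24_stabilizes_octad_list[OF g _ _ fixed]; simp add: forcing_step_def)+
  have "{x \<in> set C1. x \<in> set C2 \<and> x \<notin> set A} = {y}"
    using arg_cong[OF y, of set] by (simp add: new_common_points_def)
  then have yC: "y \<in> set C1 \<inter> set C2" and sub: "set C1 \<inter> set C2 \<subseteq> insert y (set A)"
    by blast+
  have "g y \<in> insert y (set A)" using C1 C2 yC sub by blast
  then have "g y = y"
    using fixed bij_is_inj[OF M24.bij[OF g]] by (auto dest: injD)
  with y fixed show ?thesis by simp
qed

lemma M24_fixes_extend_fixed:
  "g \<in> M24 \<Longrightarrow> \<forall>x\<in>set A. g x = x \<Longrightarrow> \<forall>x\<in>set (extend_fixed A steps). g x = x"
proof (induction A steps rule: extend_fixed.induct)
  case (2 A C1 C2 steps)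
  have "\<forall>x\<in>set (if forcing_step A C1 C2 then new_common_points A C1 C2 @ A else A). g x = x"
    using "2.prems" M24_fixes_forced_point by simp
  with "2.prems"(1) "2.IH" show ?case by simp
qed simp

section \<open>A stabilizer chain\<close>

definition base :: "nat list" where
  "base = [22, 21, 23, 0, 1, 3, 2]"

definition special_octad :: "nat list" where
  "special_octad = [0, 1, 3, 12, 15, 21, 22, 23]"

definition stab :: "nat \<Rightarrow> (nat \<Rightarrow> nat) set" where
  "stab k = {g \<in> M24. \<forall>x\<in>set (take k base). g x = x}"

definition octad_fixing_steps :: "(nat list \<times> nat list) list" where
  "octad_fixing_steps =
    [([0,1,2,3,5,14,17,23], [0,2,3,7,16,17,21,22]),
     ([0,1,2,3,5,14,17,23], [3,8,10,14,17,21,22,23]),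
     ([0,1,2,3,5,14,17,23], [0,1,2,3,5,14,17,23]),
     ([2,3,5,8,14,16,20,21], [1,3,6,9,14,20,21,23]),
     ([0,2,11,14,20,21,22,23], [0,2,11,14,20,21,22,23]),
     ([0,2,4,5,6,10,11,23], [1,3,5,6,7,11,12,23]),
     ([1,2,6,11,13,17,20,23], [1,2,6,11,13,17,20,23]),
     ([1,3,6,9,14,20,21,23], [1,3,6,9,14,20,21,23]),
     ([1,3,5,6,9,13,17,18], [1,3,5,6,9,13,17,18]),
     ([0,2,4,5,6,10,11,23], [1,2,3,4,5,8,11,13]),
     ([0,2,4,5,6,10,11,23], [0,2,4,5,6,10,11,23]),
     ([1,2,3,4,5,8,11,13], [1,2,3,4,5,8,11,13]),
     ([3,5,7,8,9,13,14,23], [3,5,7,8,9,13,14,23]),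
     ([1,3,5,6,7,11,12,23], [1,3,5,6,7,11,12,23]),
     ([4,6,8,9,10,14,15,23], [4,6,8,9,10,14,15,23]),
     ([5,7,9,10,11,15,16,23], [5,7,9,10,11,15,16,23]),
     ([8,10,12,13,14,18,19,23], [8,10,12,13,14,18,19,23])]"

lemma extend_fixed_base: "set [0..<24] \<subseteq> set (extend_fixed base octad_fixing_steps)"
  by code_simp

lemma stab_7: "stab 7 = {id}"
proof (intro equalityI subsetI)
  fix g assume g: "g \<in> stab 7"
  then have "g \<in> M24" "\<forall>x\<in>set base. g x = x" by (simp_all add: stab_def base_def)
  then have "\<forall>x\<in>set (extend_fixed base octad_fixing_steps). g x = x"
    by (rule M24_fixes_extend_fixed)
  then have "g x = x" if "x \<in> Theta" for x
    using extend_fixed_base that by (auto simp: Theta_def)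
  moreover have "g x = x" if "x \<notin> Theta" for x
    using M24_permutes[OF \<open>g \<in> M24\<close>] that by (simp add: permutes_def)
  ultimately show "g \<in> {id}" by (auto simp: fun_eq_iff)
qed (simp add: stab_def id_in_M24)

text \<open>The orbit of base ! k under stab k; for k = 5 and k = 6 it is cut down by the
  octad through the first five base points, which stab 5 stabilizes.\<close>
definition base_orbit :: "nat \<Rightarrow> nat list" where
  "base_orbit k = (if k < 5 then [y \<leftarrow> [0..<24]. y \<notin> set (take k base)]
     else if k = 5 then [y \<leftarrow> special_octad. y \<notin> set (take 5 base)]
     else [y \<leftarrow> [0..<24]. y \<notin> set special_octad])"

text \<open>Coset representatives of stab (Suc k) in stab k, listed by the image of base ! k;
  they were found by machine and are checked by transversals_ok.\<close>
definition transversals :: "nat list list list" where "transversals =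
  [[[3,4,5,7,15,16,11,13,21,9,6,17,10,20,23,12,22,19,18,8,14,1,0,2],
    [3,4,5,7,8,16,20,22,6,18,21,14,12,11,23,10,13,19,9,15,17,0,1,2],
    [3,4,5,7,13,20,16,6,22,19,15,23,10,11,14,12,8,18,9,21,17,0,2,1],
    [2,4,5,7,11,22,19,18,20,16,15,23,12,13,17,10,8,6,21,9,14,0,3,1],
    [2,3,5,7,11,15,23,14,20,16,22,19,10,8,9,12,13,21,6,17,18,0,4,1],
    [2,3,4,14,8,22,12,7,20,6,15,9,17,11,19,23,13,21,16,10,18,0,5,1],
    [2,3,4,9,18,17,12,7,19,5,13,14,22,23,20,11,15,16,21,10,8,0,6,1],
    [2,3,5,4,9,8,23,14,18,19,6,16,12,15,11,10,21,13,22,17,20,0,7,1],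
    [2,3,4,15,11,23,7,10,21,17,9,14,19,5,6,16,13,18,22,12,20,0,8,1],
    [2,3,4,6,20,23,12,7,8,14,21,5,11,17,18,22,16,15,13,10,19,0,9,1],
    [2,3,5,4,19,13,17,23,9,18,16,21,7,20,8,12,6,11,15,14,22,0,10,1],
    [2,3,4,6,8,18,7,10,14,20,16,21,22,13,15,9,5,23,19,12,17,0,11,1],
    [2,3,5,4,18,11,14,17,19,9,21,6,10,22,13,7,16,8,20,23,15,0,12,1],
    [2,3,4,18,5,6,7,10,19,9,17,22,21,11,23,20,8,15,14,12,16,0,13,1],
    [2,3,4,5,19,11,12,7,18,9,16,6,23,22,8,17,21,13,15,10,20,0,14,1],
    [2,3,4,8,6,5,7,10,20,14,22,17,16,23,11,19,18,13,9,12,21,0,15,1],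
    [2,3,4,8,20,11,10,12,14,6,18,22,19,9,13,15,17,5,21,7,23,0,16,1],
    [2,3,4,5,9,13,10,12,19,18,6,21,14,20,11,23,16,8,22,7,15,0,17,1],
    [2,3,4,13,23,11,7,10,16,22,14,9,20,6,5,21,15,8,17,12,19,0,18,1],
    [2,3,4,8,14,13,12,7,6,20,17,18,15,21,5,16,22,11,23,10,9,0,19,1],
    [2,3,4,13,16,5,10,12,22,23,15,14,21,17,8,18,9,11,19,7,6,0,20,1],
    [2,3,4,13,22,8,12,7,23,16,9,15,18,19,11,20,14,5,6,10,17,0,21,1],
    [0,1,2,3,4,5,6,7,8,9,10,11,12,13,14,15,16,17,18,19,20,21,22,23],
    [2,3,4,5,18,8,7,10,9,19,21,16,17,15,13,14,6,11,20,12,22,0,23,1]],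
   [[2,3,4,6,14,15,10,12,20,8,5,16,9,19,23,11,21,18,17,7,13,0,22,1],
    [2,3,4,6,20,19,10,7,14,8,21,16,11,15,13,9,5,17,18,12,23,1,22,0],
    [1,3,4,6,8,21,12,7,14,20,19,13,9,18,16,11,17,5,15,10,23,2,22,0],
    [1,2,4,6,16,14,7,12,21,5,19,17,11,23,8,9,13,20,15,10,18,3,22,0],
    [1,2,3,13,9,21,10,12,14,15,19,17,23,11,18,16,6,20,5,7,8,4,22,0],
    [1,2,3,8,9,16,23,14,12,20,18,7,10,11,19,21,6,15,4,17,13,5,22,0],
    [1,2,4,3,16,7,14,20,5,21,17,19,9,23,10,11,13,12,18,8,15,6,22,0],
    [1,2,3,14,11,23,4,12,8,21,20,19,15,6,5,18,9,17,16,10,13,7,22,0],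
    [1,2,3,5,9,23,16,15,20,12,7,18,21,11,17,10,6,14,13,19,4,8,22,0],
    [1,2,4,3,13,12,19,5,15,14,8,21,11,16,7,6,23,10,17,18,20,9,22,0],
    [1,2,3,5,11,17,12,4,15,18,13,16,8,6,14,21,9,23,19,7,20,10,22,0],
    [1,2,4,3,23,10,21,15,20,19,18,14,6,13,12,9,16,7,8,17,5,11,22,0],
    [1,2,3,17,11,5,10,7,16,13,18,15,19,6,23,20,9,14,8,4,21,12,22,0],
    [1,2,3,4,9,10,21,20,15,14,17,19,16,11,7,23,6,12,8,18,5,13,22,0],
    [1,2,3,7,11,4,23,17,21,8,19,20,18,6,10,15,9,12,13,5,16,14,22,0],
    [1,2,3,7,6,10,8,16,17,20,13,23,14,9,12,18,11,4,5,19,21,15,22,0],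
    [1,2,3,4,6,12,19,15,5,21,18,14,23,9,10,13,11,7,17,8,20,16,22,0],
    [1,2,3,12,11,10,5,14,13,16,15,18,20,6,4,19,9,7,21,23,8,17,22,0],
    [1,2,3,7,9,12,20,21,16,23,5,8,15,11,4,14,6,10,19,13,17,18,22,0],
    [1,2,3,12,6,4,16,8,14,18,21,5,17,9,7,20,11,10,23,15,13,19,22,0],
    [1,2,3,12,9,7,18,13,8,5,23,16,19,11,10,17,6,4,15,21,14,20,22,0],
    [0,1,2,3,4,5,6,7,8,9,10,11,12,13,14,15,16,17,18,19,20,21,22,23],
    [1,2,3,4,11,7,14,5,20,19,8,21,13,6,12,16,9,10,18,17,15,23,22,0]],
   [[1,2,3,5,6,14,18,20,4,16,19,12,10,9,23,8,11,17,7,13,15,21,22,0],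
    [0,2,3,5,6,17,20,18,16,4,7,15,8,11,23,10,9,14,19,13,12,21,22,1],
    [0,1,3,5,11,23,13,18,12,19,15,7,10,6,17,8,9,14,4,20,16,21,22,2],
    [0,1,2,12,11,10,20,18,5,19,8,17,23,9,7,15,6,4,14,13,16,21,22,3],
    [0,1,2,7,13,10,15,17,5,14,8,18,9,23,12,20,16,3,19,11,6,21,22,4],
    [0,1,3,2,19,23,6,16,12,11,15,9,8,13,14,10,7,17,20,4,18,21,22,5],
    [0,1,2,13,11,5,23,19,8,16,10,4,14,3,12,17,9,15,20,7,18,21,22,6],
    [0,1,2,4,14,10,23,6,5,13,8,16,20,15,3,9,18,12,11,19,17,21,22,7],
    [0,1,3,2,4,15,11,7,23,9,12,6,10,18,19,5,17,16,13,14,20,21,22,8],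
    [0,1,2,4,3,5,16,12,8,23,10,13,7,11,19,20,6,18,17,14,15,21,22,9],
    [0,1,3,2,14,12,9,17,15,6,23,11,5,20,4,8,16,7,18,19,13,21,22,10],
    [0,1,2,16,6,5,4,17,8,13,10,23,18,9,20,19,3,7,12,15,14,21,22,11],
    [0,1,2,3,19,10,9,16,5,11,8,6,15,20,4,23,17,7,13,14,18,21,22,12],
    [0,1,2,6,16,5,3,18,8,11,10,9,17,23,15,14,4,12,7,20,19,21,22,13],
    [0,1,2,6,15,8,9,12,10,3,5,11,13,7,20,17,18,4,19,16,23,21,22,14],
    [0,1,2,3,14,8,11,17,10,6,5,9,23,18,19,12,7,16,20,4,13,21,22,15],
    [0,1,2,11,13,5,9,14,8,6,10,3,19,4,7,18,23,20,15,12,17,21,22,16],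
    [0,1,2,6,20,10,11,4,5,9,8,3,14,19,16,13,12,18,23,15,7,21,22,17],
    [0,1,2,11,7,8,3,20,10,9,5,6,16,15,12,19,14,23,17,13,4,21,22,18],
    [0,1,2,11,12,10,6,23,5,3,8,9,18,17,13,16,20,14,4,7,15,21,22,19],
    [0,1,2,4,19,8,13,18,10,16,5,23,9,17,14,7,12,6,15,3,11,21,22,20],
    [0,1,2,3,4,5,6,7,8,9,10,11,12,13,14,15,16,17,18,19,20,21,22,23]],
   [[0,1,2,3,4,5,6,7,8,9,10,11,12,13,14,15,16,17,18,19,20,21,22,23],
    [1,0,2,3,16,5,6,19,10,11,8,9,15,13,17,12,4,14,20,7,18,21,22,23],
    [2,0,1,11,16,8,6,7,10,3,5,9,20,4,18,14,13,12,15,19,17,21,22,23],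
    [3,0,2,1,10,17,9,4,16,11,7,6,12,18,5,15,19,14,20,8,13,21,22,23],
    [4,0,1,5,2,7,14,18,20,12,9,11,19,16,8,17,13,15,3,10,6,21,22,23],
    [5,0,1,4,20,8,11,13,2,12,10,14,17,6,7,19,18,15,3,9,16,21,22,23],
    [6,0,1,9,20,17,2,19,14,3,13,11,16,18,4,10,5,12,15,7,8,21,22,23],
    [7,0,1,8,10,4,6,19,9,12,20,16,18,11,5,13,17,15,3,2,14,21,22,23],
    [8,0,1,7,9,5,16,17,10,12,2,6,13,14,4,18,19,15,3,20,11,21,22,23],
    [9,0,1,6,14,4,11,5,20,3,7,2,10,8,17,16,19,12,15,13,18,21,22,23],
    [10,0,1,6,17,8,4,18,5,15,2,19,16,11,13,9,7,3,12,14,20,21,22,23],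
    [11,0,1,2,10,18,9,13,16,3,19,6,14,17,8,20,7,12,15,5,4,21,22,23],
    [12,0,2,1,5,18,17,13,4,20,6,19,15,9,8,3,7,11,14,10,16,21,22,23],
    [13,0,1,7,4,14,5,11,17,3,6,19,18,16,20,8,2,12,15,9,10,21,22,23],
    [14,0,1,2,8,17,18,4,13,15,6,7,20,9,5,11,19,3,12,10,16,21,22,23],
    [15,0,2,1,8,9,18,16,13,14,19,7,3,17,10,12,6,20,11,5,4,21,22,23],
    [16,0,1,6,13,11,8,20,18,12,19,7,9,4,14,10,2,15,3,17,5,21,22,23],
    [17,0,1,4,7,6,8,16,13,3,14,18,19,11,9,5,10,12,15,20,2,21,22,23],
    [18,0,1,7,20,16,14,10,11,15,19,2,8,5,9,13,6,3,12,4,17,21,22,23],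
    [19,0,1,4,9,11,6,2,16,15,18,10,5,8,20,17,14,3,12,7,13,21,22,23],
    [20,0,1,2,5,9,17,16,4,12,7,19,11,18,10,14,6,15,3,8,13,21,22,23]],
   [[0,1,2,3,4,5,6,7,8,9,10,11,12,13,14,15,16,17,18,19,20,21,22,23],
    [0,2,1,11,13,8,6,19,5,9,10,3,14,4,12,20,16,18,17,7,15,21,22,23],
    [0,3,2,1,19,17,9,8,7,6,16,11,15,18,14,12,10,5,13,4,20,21,22,23],
    [0,4,1,5,13,7,14,10,9,11,20,12,17,16,15,19,2,8,6,18,3,21,22,23],
    [0,5,1,4,18,8,11,9,10,14,2,12,19,6,15,17,20,7,16,13,3,21,22,23],
    [0,6,1,9,5,17,2,7,13,11,14,3,10,18,12,16,20,4,8,19,15,21,22,23],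
    [0,7,1,8,17,4,6,2,20,16,9,12,13,11,15,18,10,5,14,19,3,21,22,23],
    [0,8,1,7,19,5,16,20,2,6,10,12,18,14,15,13,9,4,11,17,3,21,22,23],
    [0,9,1,6,19,4,11,13,7,2,20,3,16,8,12,10,14,17,18,5,15,21,22,23],
    [0,10,1,6,7,8,4,14,2,19,5,15,9,11,3,16,17,13,20,18,12,21,22,23],
    [0,11,1,2,7,18,9,5,19,6,16,3,20,17,12,14,10,8,4,13,15,21,22,23],
    [0,12,2,1,7,18,17,10,6,19,4,20,3,9,11,15,5,8,16,13,14,21,22,23],
    [0,13,1,7,2,14,5,9,6,19,17,3,8,16,12,18,4,20,10,11,15,21,22,23],
    [0,14,1,2,19,17,18,10,6,7,13,15,11,9,3,20,8,5,16,4,12,21,22,23],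
    [0,15,2,1,6,9,18,5,19,7,13,14,12,17,20,3,8,10,4,16,11,21,22,23],
    [0,16,1,6,2,11,8,17,19,7,18,12,10,4,15,9,13,14,5,20,3,21,22,23],
    [0,17,1,4,10,6,8,20,14,18,13,3,5,11,12,19,7,9,2,16,15,21,22,23],
    [0,18,1,7,6,16,14,4,19,2,11,15,13,5,3,8,20,9,17,10,12,21,22,23],
    [0,19,1,4,14,11,6,7,18,10,16,15,17,8,3,5,9,20,13,2,12,21,22,23],
    [0,20,1,2,6,9,17,8,7,19,4,12,14,18,15,11,5,10,13,16,3,21,22,23]],
   [[0,1,2,3,4,5,6,7,8,9,10,11,12,13,14,15,16,17,18,19,20,21,22,23],
    [0,1,2,12,13,8,19,6,10,17,5,20,15,16,11,3,4,18,9,7,14,21,22,23],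
    [0,1,2,15,16,10,7,19,5,18,8,14,3,4,20,12,13,9,17,6,11,21,22,23]],
   [[0,1,2,3,4,5,6,7,8,9,10,11,12,13,14,15,16,17,18,19,20,21,22,23],
    [0,1,4,3,2,20,18,10,9,8,7,17,12,16,19,15,13,11,6,14,5,21,22,23],
    [0,1,5,3,20,2,13,9,10,7,8,19,12,6,17,15,18,14,16,11,4,21,22,23],
    [0,1,6,3,18,13,2,19,17,11,14,9,12,5,10,15,20,8,4,7,16,21,22,23],
    [0,1,7,3,10,9,19,2,20,5,4,13,12,11,18,15,17,16,14,6,8,21,22,23],
    [0,1,8,3,9,10,17,20,2,4,5,18,12,14,13,15,19,6,11,16,7,21,22,23],
    [0,1,9,3,8,7,11,5,4,2,20,6,12,19,16,15,14,18,17,13,10,21,22,23],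
    [0,1,10,3,7,8,14,4,5,20,2,16,12,17,6,15,11,13,19,18,9,21,22,23],
    [0,1,11,3,17,19,9,13,18,6,16,2,12,7,20,15,10,4,8,5,14,21,22,23],
    [0,1,13,3,16,6,5,11,14,19,17,7,12,2,8,15,4,10,20,9,18,21,22,23],
    [0,1,14,3,19,17,10,18,13,16,6,20,12,8,2,15,9,5,7,4,11,21,22,23],
    [0,1,16,3,13,18,20,17,19,14,11,10,12,4,9,15,2,7,5,8,6,21,22,23],
    [0,1,17,3,11,14,8,16,6,18,13,4,12,10,5,15,7,2,9,20,19,21,22,23],
    [0,1,18,3,6,16,4,14,11,17,19,8,12,20,7,15,5,9,2,10,13,21,22,23],
    [0,1,19,3,14,11,7,6,16,13,18,5,12,9,4,15,8,20,10,2,17,21,22,23],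
    [0,1,20,3,5,4,16,8,7,10,9,14,12,18,11,15,6,19,13,17,2,21,22,23]]]"

definition transversal_ok :: "bool list list \<Rightarrow> nat \<Rightarrow> bool" where
  "transversal_ok B k \<longleftrightarrow>
     list_all (\<lambda>p. M24_list B p \<and> list_all (\<lambda>x. p ! x = x) (take k base)) (transversals ! k)
     \<and> map (\<lambda>p. p ! (base ! k)) (transversals ! k) = base_orbit k"

lemma transversals_ok: "list_all (transversal_ok golay_basis) [0..<7]"
  by code_simp

lemma transversals_M24_list: "k < 7 \<Longrightarrow> p \<in> set (transversals ! k) \<Longrightarrow> M24_list golay_basis p"
  using transversals_ok by (auto simp: transversal_ok_def list_all_iff)

definition transversal :: "nat \<Rightarrow> (nat \<Rightarrow> nat) set" where
  "transversal k = list_perm ` set (transversals ! k)"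

lemma length_base: "length base = 7"
  by (simp add: base_def)

lemma base_lt_24: "k < 7 \<Longrightarrow> base ! k < 24"
  by (simp add: base_def nth_Cons split: nat.split)

lemma transversal_subset_stab: "k < 7 \<Longrightarrow> transversal k \<subseteq> stab k"
proof
  fix t assume k: "k < 7" and "t \<in> transversal k"
  then obtain p where p: "p \<in> set (transversals ! k)" "t = list_perm p"
    by (auto simp: transversal_def)
  then have "M24_list golay_basis p" "\<forall>x\<in>set (take k base). p ! x = x"
    using transversals_ok k by (auto simp: transversal_ok_def list_all_iff)
  moreover have "x < 24" if "x \<in> set (take k base)" for x
    using that k base_lt_24 by (auto simp: in_set_conv_nth)
  ultimately show "t \<in> stab k"
    using p list_perm_M24 by (auto simp: stab_def list_perm_def)
qed

lemma transversal_images: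
  assumes "k < 7"
  shows "map (\<lambda>p. list_perm p (base ! k)) (transversals ! k) = base_orbit k"
  using transversals_ok assms base_lt_24[OF assms]
  by (simp add: transversal_ok_def list_all_iff list_perm_def)

lemma distinct_transversal_images:
  "k < 7 \<Longrightarrow> distinct (map (\<lambda>p. list_perm p (base ! k)) (transversals ! k))"
  by (simp add: transversal_images base_orbit_def special_octad_def)

lemma inj_on_transversal: "k < 7 \<Longrightarrow> inj_on (\<lambda>t. t (base ! k)) (transversal k)"
  using distinct_transversal_images by (auto simp: transversal_def distinct_map inj_on_def)

lemma card_transversal: "k < 7 \<Longrightarrow> card (transversal k) = length (transversals ! k)"
proof -
  assume k: "k < 7"
  then have "inj_on list_perm (set (transversals ! k))"
    using distinct_transversal_images by (auto simp: distinct_map inj_on_def)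
  with k show ?thesis
    using distinct_transversal_images
    by (simp add: transversal_def card_image distinct_card distinct_map)
qed

lemma transversal_covers:
  assumes "k < 7" and "y \<in> set (base_orbit k)"
  shows "\<exists>t\<in>transversal k. t (base ! k) = y"
proof -
  from assms have "y \<in> set (map (\<lambda>p. list_perm p (base ! k)) (transversals ! k))"
    by (simp add: transversal_images)
  then obtain p where "p \<in> set (transversals ! k)" "list_perm p (base ! k) = y" by auto
  then show ?thesis by (auto simp: transversal_def)
qed

lemma stab_stabilizes_special_octad:
  assumes g: "g \<in> stab 5"
  shows "g ` set special_octad = set special_octad"
proof (rule M24_stabilizes_octad_list)
  show "g \<in> M24" "\<forall>x\<in>set (take 5 base). g x = x" using g by (simp_all add: stab_def)
qed (code_simp, code_simp)

lemma stab_Suc: "k < 7 \<Longrightarrow> stab (Suc k) = {g \<in> stab k. g (base ! k) = base ! k}"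
  using take_Suc_conv_app_nth[of k base] by (auto simp: stab_def base_def)

lemma stab_mono: "k \<le> m \<Longrightarrow> stab m \<subseteq> stab k"
  using set_take_subset_set_take[of k m base] by (auto simp: stab_def)

lemma stab_base_orbit:
  assumes k: "k < 7" and g: "g \<in> stab k"
  shows "g (base ! k) \<in> set (base_orbit k)"
proof -
  have gM: "g \<in> M24" using g by (simp add: stab_def)
  have Theta: "g (base ! k) < 24"
    using M24_apply_in_Theta_iff[OF gM] base_lt_24[OF k] by (simp add: Theta_def)
  have new: "g (base ! k) \<notin> set (take k base)"
  proof
    assume "g (base ! k) \<in> set (take k base)"
    then have "g (g (base ! k)) = g (base ! k)" using g by (simp add: stab_def)
    then have "g (base ! k) = base ! k" using bij_is_inj[OF M24.bij[OF gM]] by (auto dest: injD)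
    with \<open>g (base ! k) \<in> set (take k base)\<close> k show False
      by (simp add: base_def nth_Cons split: nat.splits)
  qed
  consider "k < 5" | "k = 5" | "k = 6" using k by linarith
  then show ?thesis
  proof cases
    case 1 then show ?thesis using Theta new by (simp add: base_orbit_def)
  next
    case 2
    then have "g (base ! k) \<in> g ` set special_octad" by (simp add: base_def special_octad_def)
    with 2 g new show ?thesis by (simp add: base_orbit_def stab_stabilizes_special_octad)
  next
    case 3
    then have "g \<in> stab 5" using g stab_mono[of 5 6] by auto
    then have "g ` set special_octad = set special_octad" by (rule stab_stabilizes_special_octad)
    moreover have "base ! k \<notin> set special_octad" using 3 by (simp add: base_def special_octad_def)
    ultimately have "g (base ! k) \<notin> set special_octad"
      using bij_is_inj[OF M24.bij[OF gM]] by (metis inj_image_mem_iff)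
    with 3 Theta show ?thesis by (simp add: base_orbit_def)
  qed
qed

lemma perm_group_stab: "perm_group (stab k)"
  unfolding stab_def by (rule M24.pointwise_stabilizer)

lemma stab_decomposition:
  assumes k: "k < 7"
  shows "bij_betw (\<lambda>(t, h). t \<circ> h) (transversal k \<times> stab (Suc k)) (stab k)"
  unfolding stab_Suc[OF k]
  by (rule perm_group.transversal_bij[OF perm_group_stab transversal_subset_stab[OF k]
        inj_on_transversal[OF k]])
    (use transversal_covers[OF k] stab_base_orbit[OF k] in blast)

lemma transversal_lengths: "map length transversals = [24, 23, 22, 21, 20, 3, 16]"
  by (simp add: transversals_def)

lemma card_stab: "k \<le> 7 \<Longrightarrow> card (stab k) = prod_list (drop k (map length transversals))"
proof (induction k rule: inc_induct)
  case base
  have "length (map length transversals) = 7" by (simp only: transversal_lengths) simp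
  then show ?case by (simp add: stab_7)
next
  case (step k)
  have "length (map length transversals) = 7" by (simp only: transversal_lengths) simp
  then have drop: "drop k (map length transversals)
      = length (transversals ! k) # drop (Suc k) (map length transversals)"
    using step(2) Cons_nth_drop_Suc[of k "map length transversals"] by simp
  have "card (stab k) = card (transversal k) * card (stab (Suc k))"
    using bij_betw_same_card[OF stab_decomposition[OF step(2)]] by (simp add: card_cartesian_product)
  also have "\<dots> = prod_list (drop k (map length transversals))"
    using step(3) card_transversal[OF step(2)] by (simp add: drop)
  finally show ?case .
qed

lemma card_M24: "card M24 = 244823040"
  using card_stab[of 0] by (simp add: stab_def transversal_lengths)

section \<open>Transitivity and fixed points\<close>

lemma M24_maps_base_prefix:
  "k \<le> 5 \<Longrightarrow> distinct xs \<Longrightarrow> length xs = k \<Longrightarrow> set xs \<subseteq> Theta \<Longrightarrow>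
   \<exists>g\<in>M24. map g (take k base) = xs"
proof (induction k arbitrary: xs)
  case 0
  then show ?case using id_in_M24 by auto
next
  case (Suc k)
  then obtain ys z where xs: "xs = ys @ [z]" by (metis length_Suc_conv_rev)
  with Suc.prems have ys: "distinct ys" "length ys = k" "set ys \<subseteq> Theta" "z \<notin> set ys" "z \<in> Theta"
    by auto
  obtain g where g: "g \<in> M24" "map g (take k base) = ys"
    using Suc.IH[OF _ ys(1-3)] Suc.prems(1) by auto
  let ?y = "inv g z"
  have "?y \<notin> set (take k base)"
  proof
    assume "?y \<in> set (take k base)"
    then have "g ?y \<in> set ys" using g(2) by force
    with ys(4) g(1) show False by simp
  qed
  moreover have "?y < 24"
    using M24_apply_in_Theta_iff[OF g(1), of ?y] ys(5) g(1) by (simp add: Theta_def)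
  ultimately have "?y \<in> set (base_orbit k)" using Suc.prems(1) by (simp add: base_orbit_def)
  then obtain t where t: "t \<in> transversal k" "t (base ! k) = ?y"
    using transversal_covers[of k ?y] Suc.prems(1) by auto
  have "k < 7" using Suc.prems(1) by simp
  with t(1) have tS: "t \<in> stab k" using transversal_subset_stab by blast
  have "map (g \<circ> t) (take (Suc k) base) = map g (map t (take k base)) @ [g (t (base ! k))]"
    using Suc.prems(1) by (simp add: take_Suc_conv_app_nth length_base)
  also have "map t (take k base) = take k base"
    using tS by (simp add: stab_def map_idI)
  finally have "map (g \<circ> t) (take (Suc k) base) = xs"
    using g t(2) xs by (simp add: comp_def)
  moreover have "g \<circ> t \<in> M24" using g(1) tS by (simp add: stab_def M24.comp_closed)
  ultimately show ?case by blast
qed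

lemma card_M24_maps:
  assumes k: "length xs = k" "length ys = k" "k \<le> 5"
    and xs: "distinct xs" "set xs \<subseteq> Theta" and ys: "distinct ys" "set ys \<subseteq> Theta"
  shows "card {g \<in> M24. map g xs = ys} = card (stab k)"
proof -
  define B where "B = take k base"
  obtain u where u: "u \<in> M24" "map u B = xs"
    using M24_maps_base_prefix[OF k(3) xs(1) k(1) xs(2)] by (auto simp: B_def)
  obtain v where v: "v \<in> M24" "map v B = ys"
    using M24_maps_base_prefix[OF k(3) ys(1) k(2) ys(2)] by (auto simp: B_def)
  have "map g xs = ys \<longleftrightarrow> (\<forall>x\<in>set B. g (u x) = v x)" for g
    by (simp add: u(2)[symmetric] v(2)[symmetric] map_eq_conv)
  then have "{g \<in> M24. map g xs = ys} = {g \<in> M24. \<forall>x\<in>set B. g (u x) = v x}" by simp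
  then show ?thesis by (simp add: M24.card_coset[OF u(1) v(1)] stab_def B_def)
qed

definition fixed_count :: "nat list \<Rightarrow> nat" where
  "fixed_count c = length [i \<leftarrow> [0..<24]. c ! i = i]"

definition few_fixed_or_involution :: "nat list \<Rightarrow> bool" where
  "few_fixed_or_involution c \<longleftrightarrow>
     c = [0..<24] \<or> fixed_count c < 8 \<or> (fixed_count c = 8 \<and> map (nth c) c = [0..<24])"

lemma stab_5_check:
  "list_all (\<lambda>a. list_all (\<lambda>b. few_fixed_or_involution (map (nth a) b)) (transversals ! 6))
     (transversals ! 5)"
  by code_simp

lemma list_perm_comp:
  "length b = 24 \<Longrightarrow> \<forall>i\<in>set b. i < 24 \<Longrightarrow> list_perm a \<circ> list_perm b = list_perm (map (nth a) b)"
  by (auto simp: fun_eq_iff list_perm_def)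

lemma list_perm_eq_id: "length c = 24 \<Longrightarrow> list_perm c = id \<longleftrightarrow> c = [0..<24]"
proof
  assume c: "length c = 24" "list_perm c = id"
  have "c ! i = i" if "i < 24" for i
    using fun_cong[OF c(2), of i] that by (simp add: list_perm_def)
  with c(1) show "c = [0..<24]" by (intro nth_equalityI) simp_all
qed (auto simp: list_perm_def fun_eq_iff)

lemma card_fixed_list_perm: "length c = 24 \<Longrightarrow> card {x \<in> Theta. list_perm c x = x} = fixed_count c"
proof -
  assume "length c = 24"
  then have eq: "{x \<in> Theta. list_perm c x = x} = set [i \<leftarrow> [0..<24]. c ! i = i]"
    by (auto simp: Theta_def list_perm_def)
  show ?thesis unfolding eq fixed_count_def by (rule distinct_card) simp
qed

lemma stab_5_fixed_points:
  assumes s: "s \<in> stab 5" and nid: "s \<noteq> id"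
  shows "card {x \<in> Theta. s x = x} \<le> 8"
    and "card {x \<in> Theta. s x = x} = 8 \<Longrightarrow> s \<circ> s = id"
proof -
  have "(\<lambda>(t, h). t \<circ> h) ` (transversal 6 \<times> {id}) = transversal 6" by force
  then have "stab 6 = transversal 6"
    using bij_betw_imp_surj_on[OF stab_decomposition[of 6]] by (simp add: stab_7)
  then have "stab 5 = (\<lambda>(t, h). t \<circ> h) ` (transversal 5 \<times> transversal 6)"
    using bij_betw_imp_surj_on[OF stab_decomposition[of 5]] by simp
  with s obtain a b where ab: "a \<in> set (transversals ! 5)" "b \<in> set (transversals ! 6)"
    "s = list_perm a \<circ> list_perm b"
    by (auto simp: transversal_def)
  let ?c = "map (nth a) b"
  have "M24_list golay_basis a" "M24_list golay_basis b"
    by (rule transversals_M24_list[OF _ ab(1)] transversals_M24_list[OF _ ab(2)], simp)+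
  then have a: "length a = 24" "\<forall>i\<in>set a. i < 24" and b: "length b = 24" "\<forall>i\<in>set b. i < 24"
    by (auto simp: M24_list_def list_all_iff)
  have c: "s = list_perm ?c" using ab(3) list_perm_comp[OF b, of a] by simp
  have c_len: "length ?c = 24" using b by simp
  have c_lt: "\<forall>i\<in>set ?c. i < 24" using a b by auto
  have "few_fixed_or_involution ?c" using stab_5_check ab(1,2) by (simp add: list_all_iff)
  moreover have "?c \<noteq> [0..<24]"
  proof
    assume "?c = [0..<24]"
    then have "list_perm ?c = id" using list_perm_eq_id[OF c_len] by blast
    with nid c show False by simp
  qed
  ultimately have fc: "fixed_count ?c \<le> 8" and inv: "fixed_count ?c = 8 \<Longrightarrow> map (nth ?c) ?c = [0..<24]"
    by (auto simp: few_fixed_or_involution_def)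
  have card_fix: "card {x \<in> Theta. s x = x} = fixed_count ?c"
    using card_fixed_list_perm[OF c_len] c by simp
  show "card {x \<in> Theta. s x = x} \<le> 8" using fc card_fix by simp
  assume "card {x \<in> Theta. s x = x} = 8"
  then have "map (nth ?c) ?c = [0..<24]" using inv card_fix by simp
  then have "list_perm ?c \<circ> list_perm ?c = id"
    using list_perm_comp[OF c_len c_lt, of ?c] list_perm_eq_id[of "map (nth ?c) ?c"] c_len by simp
  with c show "s \<circ> s = id" by simp
qed

text \<open>By 5-transitivity every element with at least five fixed points is conjugate to
  an element of stab 5.\<close>
lemma M24_fixed_points:
  assumes r: "r \<in> M24" and nid: "r \<noteq> id"
  shows "card {x \<in> Theta. r x = x} \<le> 8"
    and "card {x \<in> Theta. r x = x} = 8 \<Longrightarrow> r \<circ> r = id"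
proof -
  let ?F = "{x \<in> Theta. r x = x}"
  have goal: "card ?F \<le> 8 \<and> (card ?F = 8 \<longrightarrow> r \<circ> r = id)"
  proof (cases "card ?F < 5")
    case False
    have fin: "finite ?F" by (simp add: Theta_def)
    let ?xs = "take 5 (sorted_list_of_set ?F)"
    have xs: "distinct ?xs" "length ?xs = 5" "set ?xs \<subseteq> ?F"
      using False fin by (auto dest: in_set_takeD)
    then obtain u where u: "u \<in> M24" "map u (take 5 base) = ?xs"
      using M24_maps_base_prefix[of 5 ?xs] by auto
    let ?s = "inv u \<circ> r \<circ> u"
    have "?s \<in> M24" using u r by (simp add: M24.comp_closed M24.inv_closed)
    moreover have "?s x = x" if "x \<in> set (take 5 base)" for x
    proof -
      from that have "u x \<in> set (map u (take 5 base))" by simp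
      then have "u x \<in> set ?xs" by (simp only: u(2))
      with xs(3) show ?thesis using u(1) by auto
    qed
    ultimately have s: "?s \<in> stab 5" by (simp add: stab_def)
    have "?s \<noteq> id"
    proof
      assume "?s = id"
      then have "u \<circ> ?s \<circ> inv u = u \<circ> inv u" by simp
      with u(1) have "r = id" by (simp add: fun_eq_iff)
      with nid show False ..
    qed
    note fp = stab_5_fixed_points[OF s this]
    have card_eq: "card {x \<in> Theta. ?s x = x} = card ?F"
      by (rule card_fixed_points_conj[OF M24_permutes[OF u(1)]])
    have "r \<circ> r = u \<circ> (?s \<circ> ?s) \<circ> inv u" using u(1) by (simp add: fun_eq_iff)
    then have "r \<circ> r = id" if "?s \<circ> ?s = id"
      using that u(1) by (simp add: fun_eq_iff)
    with fp card_eq show ?thesis by auto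
  qed simp
  then show "card ?F \<le> 8" "card ?F = 8 \<Longrightarrow> r \<circ> r = id" by auto
qed

section \<open>Permutation codes\<close>

lemma card_le_Mnd: "perm_code n d A \<Longrightarrow> card A \<le> Mnd n d"
proof -
  assume A: "perm_code n d A"
  have "{A. perm_code n d A} \<subseteq> Pow {p. p permutes {0..<n}}"
    by (auto simp: perm_code_def)
  then have "finite {A. perm_code n d A}"
    by (rule finite_subset) (simp add: finite_permutations)
  then show ?thesis
    unfolding Mnd_def using A by (intro Max_ge) auto
qed

lemma M24_hd_tri:
  assumes F: "F \<in> Theta" and p: "p \<in> M24" and q: "q \<in> M24" and pq: "p \<noteq> q"
  shows "14 \<le> hd_on (Theta - {F}) (tri F p) (tri F q)"
proof -
  let ?r = "inv q \<circ> p"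
  have r: "?r \<in> M24" using p q by (simp add: M24.comp_closed M24.inv_closed)
  have "?r \<noteq> id"
  proof
    assume "?r = id"
    then have "q \<circ> ?r = q" by simp
    with q pq show False by (simp add: fun_eq_iff)
  qed
  note fp = M24_fixed_points[OF r this]
  have fin: "finite Theta" and card: "card Theta = 24" by (simp_all add: Theta_def)
  have hd: "hd_on Theta p q = 24 - card {x \<in> Theta. ?r x = x}"
    using hd_on_eq_card_minus_fixed[OF fin M24_permutes[OF p] M24_permutes[OF q]] card by simp
  note tri = hd_on_tri_ge[OF fin M24_permutes[OF p] M24_permutes[OF q], of F]
  show ?thesis
  proof (cases "card {x \<in> Theta. ?r x = x} = 8")
    case True
    then show ?thesis using hd tri(2) fp(2) by simp
  next
    case False
    then show ?thesis using hd tri(1) fp(1) by simp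
  qed
qed

lemma card_le_Mnd_tri_M24:
  assumes X: "X \<subseteq> M24" and R: "\<forall>p\<in>X. \<forall>y\<in>R. tri 23 p y = y"
    and n: "{0..<n} = Theta - {23} - R"
  shows "card X \<le> Mnd n 14"
proof -
  have F: "23 \<in> Theta" by (simp add: Theta_def)
  have "inj_on (tri 23) X"
  proof (rule inj_onI, rule ccontr)
    fix p q assume p: "p \<in> X" and q: "q \<in> X" and eq: "tri 23 p = tri 23 q" and pq: "p \<noteq> q"
    have "14 \<le> hd_on (Theta - {23}) (tri 23 p) (tri 23 q)"
      by (rule M24_hd_tri[OF F]) (use p q pq X in auto)
    with eq show False by (simp add: hd_on_def)
  qed
  then have "card (tri 23 ` X) = card X" by (rule card_image)
  moreover have "perm_code n 14 (tri 23 ` X)"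
    unfolding perm_code_def
  proof (intro conjI ballI impI)
    fix f assume "f \<in> tri 23 ` X"
    then obtain p where p: "p \<in> X" "f = tri 23 p" by blast
    have "f permutes (Theta - {23})"
      unfolding p(2) by (rule tri_permutes[OF M24_permutes F]) (use p X in blast)
    then show "f permutes {0..<n}"
      by (rule permutes_superset) (use R p n in blast)
  next
    fix f g assume "f \<in> tri 23 ` X" "g \<in> tri 23 ` X" and fg: "f \<noteq> g"
    then obtain p q where p: "p \<in> X" "f = tri 23 p" and q: "q \<in> X" "g = tri 23 q" by blast
    with fg have "p \<noteq> q" by blast
    have hd: "14 \<le> hd_on (Theta - {23}) f g"
      unfolding p(2) q(2) by (rule M24_hd_tri[OF F]) (use p q X \<open>p \<noteq> q\<close> in blast)+
    have "f x = g x" if "x \<in> R" for x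
      using R p q that by simp
    then have "{x \<in> Theta - {23}. f x \<noteq> g x} = {x \<in> {0..<n}. f x \<noteq> g x}"
      unfolding n by blast
    with hd show "14 \<le> hd_on {0..<n} f g" by (simp add: hd_on_def)
  qed
  ultimately show ?thesis using card_le_Mnd by metis
qed

lemma tri_23_fixes_iff: "y \<noteq> 23 \<Longrightarrow> tri 23 p y = y \<longleftrightarrow> p y = y \<or> (p y = 23 \<and> p 23 = y)"
  by (auto simp: tri_def)

lemma card_tri_fixing_22: "card {p \<in> M24. tri 23 p 22 = 22} = 10644480"
proof -
  let ?A = "{p \<in> M24. map p [22] = [22]}" and ?B = "{p \<in> M24. map p [22, 23] = [23, 22]}"
  have "{p \<in> M24. tri 23 p 22 = 22} = ?A \<union> ?B"
    by (auto simp: tri_23_fixes_iff)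
  moreover have "card (?A \<union> ?B) = card ?A + card ?B"
    by (rule card_Un_disjoint) (use finite_M24 in auto)
  moreover have "card ?A = card (stab 1)" "card ?B = card (stab 2)"
    by (rule card_M24_maps; simp add: Theta_def)+
  ultimately show ?thesis by (simp add: card_stab transversal_lengths)
qed

lemma card_tri_fixing_22_21: "card {p \<in> M24. tri 23 p 22 = 22 \<and> tri 23 p 21 = 21} = 483840"
proof -
  let ?A = "{p \<in> M24. map p [22, 21] = [22, 21]}"
    and ?B = "{p \<in> M24. map p [22, 23, 21] = [23, 22, 21]}"
    and ?C = "{p \<in> M24. map p [22, 21, 23] = [22, 23, 21]}"
  have "{p \<in> M24. tri 23 p 22 = 22 \<and> tri 23 p 21 = 21} = ?A \<union> ?B \<union> ?C"
    by (auto simp: tri_23_fixes_iff)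
  moreover have "card (?A \<union> ?B \<union> ?C) = card ?A + card ?B + card ?C"
    using finite_M24 by (subst card_Un_disjoint, auto)+
  moreover have "card ?A = card (stab 2)" "card ?B = card (stab 3)" "card ?C = card (stab 3)"
    by (rule card_M24_maps; simp add: Theta_def)+
  ultimately show ?thesis by (simp add: card_stab transversal_lengths)
qed

theorem proposition18:
  fixes F :: nat
  assumes "F \<in> Theta"
  shows "(\<forall>p\<in>tri F ` M24. \<forall>q\<in>tri F ` M24. p \<noteq> q \<longrightarrow> 14 \<le> hd_on (Theta - {F}) p q)
    \<and> card M24 = 244823040 \<and> card M24 \<le> Mnd 23 14
    \<and> card M24 div 23 = 10644480 \<and> card M24 div 23 \<le> Mnd 22 14
    \<and> card M24 div (23 * 22) = 483840 \<and> card M24 div (23 * 22) \<le> Mnd 21 14"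
proof -
  have "\<forall>p\<in>tri F ` M24. \<forall>q\<in>tri F ` M24. p \<noteq> q \<longrightarrow> 14 \<le> hd_on (Theta - {F}) p q"
    using M24_hd_tri[OF assms] by blast
  moreover have "card M24 \<le> Mnd 23 14"
    by (rule card_le_Mnd_tri_M24[of _ "{}"]) (auto simp: Theta_def)
  moreover have "card {p \<in> M24. tri 23 p 22 = 22} \<le> Mnd 22 14"
    by (rule card_le_Mnd_tri_M24[of _ "{22}"]) (auto simp: Theta_def)
  moreover have "card {p \<in> M24. tri 23 p 22 = 22 \<and> tri 23 p 21 = 21} \<le> Mnd 21 14"
    by (rule card_le_Mnd_tri_M24[of _ "{22, 21}"]) (auto simp: Theta_def)
  ultimately show ?thesis
    by (simp add: card_M24 card_tri_fixing_22 card_tri_fixing_22_21)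
qed

end
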